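(* Let $n\ge1$, let $f_1,\dots,f_n:\mathbb{R}^d\to\mathbb{R}$ be $L$-smooth (i.e. $\|\nabla f_i(x)-\nabla f_i(y)\|\le L\|x-y\|$ for all $x,y$), $f=\frac1n\sum_i f_i$, $f^\ast:=\inf_x f(x)$ and $\Delta_0:=f(x_0)-f^\ast$. Let $x_0,\dots,x_{T-1}$, $\nabla_0,\dots,\nabla_{T-1}$ and $\gamma_0,\dots,\gamma_{T-1}$ be the iterates, gradient estimators and step-sizes produced by AdaSpider (described in the context) with input $x_0$, $\beta_0>0$, $G_0>0$. Then there is an absolute constant $C>0$ such that \[ \mathbb{E}\Big[\sum_{t=0}^{T-1}\|\nabla_t\|\Big]\le C\Big(\Delta_0\beta_0+G_0+\frac{L}{\beta_0}\log\!\Big(1+nT\Big(\frac{L}{\beta_0G_0}+\frac{\|\nabla f(x_0)\|}{G_0}\Big)\Big)+\beta_0\,\mathbb{E}\Big[\sum_{t=0}^{T-1}\gamma_t\|\nabla f(x_t)-\nabla_t\|^2\Big]\Big)n^{1/4}\sqrt T. \]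
   Context: $\|\cdot\|$ is the Euclidean norm. AdaSpider: input $x_0\in\mathbb{R}^d$, $\beta_0>0$, $G_0>0$, horizon $T\ge1$. For $t=0,1,\dots,T-1$: if $t \bmod n=0$, set $\nabla_t:=\nabla f(x_t)$; otherwise pick $i_t\in\{1,\dots,n\}$ uniformly at random (independently of the past) and set $\nabla_t:=\nabla f_{i_t}(x_t)-\nabla f_{i_t}(x_{t-1})+\nabla_{t-1}$. Then set $\gamma_t:=1\big/\big(n^{1/4}\beta_0\sqrt{n^{1/2}G_0^2+\sum_{s=0}^t\|\nabla_s\|^2}\big)$ and $x_{t+1}:=x_t-\gamma_t\nabla_t$. *)

theory Defs
  imports "HOL-Probability.Probability"
begin

text \<open>Euclidean space R^d, for a dimension d that is quantified inside the statement,
  is represented by functions nat \<Rightarrow> real vanishing outside the coordinates 0..d-1,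
  with the Euclidean inner product and norm over those coordinates.\<close>

definition Rd :: "nat \<Rightarrow> (nat \<Rightarrow> real) set" where
  "Rd d = {x. \<forall>j\<ge>d. x j = 0}"

definition inner_d :: "nat \<Rightarrow> (nat \<Rightarrow> real) \<Rightarrow> (nat \<Rightarrow> real) \<Rightarrow> real" where
  "inner_d d x y = (\<Sum>j<d. x j * y j)"

definition norm_d :: "nat \<Rightarrow> (nat \<Rightarrow> real) \<Rightarrow> real" where
  "norm_d d x = sqrt (inner_d d x x)"

definition vsub :: "(nat \<Rightarrow> real) \<Rightarrow> (nat \<Rightarrow> real) \<Rightarrow> (nat \<Rightarrow> real)" where
  "vsub x y = (\<lambda>j. x j - y j)"

definition vadd :: "(nat \<Rightarrow> real) \<Rightarrow> (nat \<Rightarrow> real) \<Rightarrow> (nat \<Rightarrow> real)" where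
  "vadd x y = (\<lambda>j. x j + y j)"

definition vscale :: "real \<Rightarrow> (nat \<Rightarrow> real) \<Rightarrow> (nat \<Rightarrow> real)" where
  "vscale c x = (\<lambda>j. c * x j)"

definition has_gradient_on_Rd ::
  "nat \<Rightarrow> ((nat \<Rightarrow> real) \<Rightarrow> real) \<Rightarrow> ((nat \<Rightarrow> real) \<Rightarrow> (nat \<Rightarrow> real)) \<Rightarrow> bool" where
  "has_gradient_on_Rd d F G \<longleftrightarrow>
     (\<forall>x\<in>Rd d. G x \<in> Rd d \<and>
        (\<forall>h\<in>Rd d. ((\<lambda>t. F (vadd x (vscale t h))) has_real_derivative inner_d d (G x) h) (at 0)))"

definition avg_fun :: "nat \<Rightarrow> (nat \<Rightarrow> (nat \<Rightarrow> real) \<Rightarrow> real) \<Rightarrow> (nat \<Rightarrow> real) \<Rightarrow> real" where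
  "avg_fun n f x = (\<Sum>i<n. f i x) / real n"

definition full_grad ::
  "nat \<Rightarrow> (nat \<Rightarrow> (nat \<Rightarrow> real) \<Rightarrow> (nat \<Rightarrow> real)) \<Rightarrow> (nat \<Rightarrow> real) \<Rightarrow> (nat \<Rightarrow> real)" where
  "full_grad n g x = (\<lambda>j. (\<Sum>i<n. g i x j) / real n)"

definition ada_step :: "nat \<Rightarrow> real \<Rightarrow> real \<Rightarrow> real \<Rightarrow> real" where
  "ada_step n \<beta>0 G0 S = 1 / (real n powr (1/4) * \<beta>0 * sqrt (sqrt (real n) * G0^2 + S))"

text \<open>State of AdaSpider at time t: (x_t, \<nabla>_t, \<Sum>_{s\<le>t} \<parallel>\<nabla>_s\<parallel>^2), where \<omega> t is the
  sampled index i_t (in 0..n-1) used at time t (ignored when t mod n = 0).\<close>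
fun spider ::
  "nat \<Rightarrow> nat \<Rightarrow> (nat \<Rightarrow> (nat \<Rightarrow> real) \<Rightarrow> (nat \<Rightarrow> real)) \<Rightarrow> (nat \<Rightarrow> real) \<Rightarrow> real \<Rightarrow> real
     \<Rightarrow> (nat \<Rightarrow> nat) \<Rightarrow> nat \<Rightarrow> (nat \<Rightarrow> real) \<times> (nat \<Rightarrow> real) \<times> real" where
  "spider d n g x0 \<beta>0 G0 \<omega> 0 =
     (let v = full_grad n g x0 in (x0, v, (norm_d d v)^2))"
| "spider d n g x0 \<beta>0 G0 \<omega> (Suc t) =
     (let (x, v, S) = spider d n g x0 \<beta>0 G0 \<omega> t;
          x' = vsub x (vscale (ada_step n \<beta>0 G0 S) v);
          v' = (if Suc t mod n = 0 then full_grad n g x'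
                else vadd (vsub (g (\<omega> (Suc t)) x') (g (\<omega> (Suc t)) x)) v)
      in (x', v', S + (norm_d d v')^2))"

definition sp_x where "sp_x d n g x0 \<beta>0 G0 \<omega> t = fst (spider d n g x0 \<beta>0 G0 \<omega> t)"
definition sp_grad where "sp_grad d n g x0 \<beta>0 G0 \<omega> t = fst (snd (spider d n g x0 \<beta>0 G0 \<omega> t))"
definition sp_gamma where
  "sp_gamma d n g x0 \<beta>0 G0 \<omega> t = ada_step n \<beta>0 G0 (snd (snd (spider d n g x0 \<beta>0 G0 \<omega> t)))"

definition idx_pmf :: "nat \<Rightarrow> nat \<Rightarrow> (nat \<Rightarrow> nat) pmf" where
  "idx_pmf n T = pmf_of_set (PiE {..<T} (\<lambda>_. {..<n}))"

end

theory Submission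
  imports Defs
begin

text \<open>Write \<open>a\<^sub>t = \<parallel>\<nabla>\<^sub>t\<parallel>\<^sup>2\<close>, \<open>r = n powr (1/4)\<close> and \<open>Q\<^sub>t = (r G\<^sub>0)\<^sup>2 + a\<^sub>0 + \<dots> + a\<^sub>t\<close>, so that
  \<open>\<gamma>\<^sub>t = 1 / (r \<beta>\<^sub>0 sqrt Q\<^sub>t)\<close> is an AdaGrad-norm step size. As the gradient of f is
  L-Lipschitz, the step from \<open>x\<^sub>t\<close> decreases f by at least
  \<open>\<gamma>\<^sub>t a\<^sub>t / 2 - \<gamma>\<^sub>t \<parallel>\<nabla>f(x\<^sub>t) - \<nabla>\<^sub>t\<parallel>\<^sup>2 / 2 - L \<gamma>\<^sub>t\<^sup>2 a\<^sub>t\<close>. Summing over t and using that f is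
  bounded below bounds \<open>\<Sum> \<gamma>\<^sub>t a\<^sub>t\<close>, which is at least \<open>(Q - (r G\<^sub>0)\<^sup>2) / (r \<beta>\<^sub>0 sqrt Q)\<close> for the
  final \<open>Q = Q\<^sub>T\<^sub>-\<^sub>1\<close>, while \<open>\<Sum> \<gamma>\<^sub>t\<^sup>2 a\<^sub>t \<le> ln (Q / (r G\<^sub>0)\<^sup>2) / (r \<beta>\<^sub>0)\<^sup>2\<close>. The resulting
  self-bounding inequality for \<open>sqrt Q\<close> is resolved with \<open>K ln (y / B) \<le> y / c + K ln (c K / B)\<close>,
  and \<open>\<Sum> \<parallel>\<nabla>\<^sub>t\<parallel> \<le> sqrt (T Q)\<close> by Cauchy-Schwarz. This holds for every sequence of sampled
  indices, hence also in expectation.\<close>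

lemma inner_d_self_nonneg: "0 \<le> inner_d d x x"
  unfolding inner_d_def by (auto intro: sum_nonneg)

lemma norm_d_power2: "(norm_d d x)\<^sup>2 = inner_d d x x"
  unfolding norm_d_def using inner_d_self_nonneg by simp

lemma norm_d_nonneg: "0 \<le> norm_d d x"
  unfolding norm_d_def using inner_d_self_nonneg by simp

lemma inner_d_le_norm_d_mult: "inner_d d x y \<le> norm_d d x * norm_d d y"
proof -
  have "(inner_d d x y)\<^sup>2 \<le> inner_d d x x * inner_d d y y"
    unfolding inner_d_def using Cauchy_Schwarz_ineq_sum[of x y "{..<d}"]
    by (simp add: power2_eq_square)
  hence "\<bar>inner_d d x y\<bar> \<le> sqrt (inner_d d x x * inner_d d y y)"
    by (metis real_sqrt_abs real_sqrt_le_mono)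
  thus ?thesis unfolding norm_d_def by (simp add: real_sqrt_mult)
qed

lemma norm_d_vscale: "norm_d d (vscale c x) = \<bar>c\<bar> * norm_d d x"
proof -
  have "inner_d d (vscale c x) (vscale c x) = c\<^sup>2 * inner_d d x x"
    unfolding inner_d_def vscale_def
    by (simp add: sum_distrib_left algebra_simps power2_eq_square)
  thus ?thesis unfolding norm_d_def by (simp add: real_sqrt_mult)
qed

lemma Rd_vadd: "x \<in> Rd d \<Longrightarrow> y \<in> Rd d \<Longrightarrow> vadd x y \<in> Rd d"
  by (simp add: Rd_def vadd_def)

lemma Rd_vsub: "x \<in> Rd d \<Longrightarrow> y \<in> Rd d \<Longrightarrow> vsub x y \<in> Rd d"
  by (simp add: Rd_def vsub_def)

lemma Rd_vscale: "x \<in> Rd d \<Longrightarrow> vscale c x \<in> Rd d"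
  by (simp add: Rd_def vscale_def)

lemma inner_d_vsub_left: "inner_d d (vsub x y) z = inner_d d x z - inner_d d y z"
  unfolding inner_d_def vsub_def by (simp add: algebra_simps sum_subtractf)

lemma inner_d_vscale_right: "inner_d d x (vscale c z) = c * inner_d d x z"
  unfolding inner_d_def vscale_def by (simp add: algebra_simps sum_distrib_left)

lemma inner_d_full_grad_left:
  "inner_d d (full_grad n g x) h = (\<Sum>i<n. inner_d d (g i x) h) / real n"
  unfolding inner_d_def full_grad_def
  by (simp add: sum_divide_distrib[symmetric] sum_distrib_right sum.swap[of _ "{..<d}"])

lemma inner_d_ge_half_norm_d_diff:
  "(norm_d d v)\<^sup>2 / 2 - (norm_d d (vsub p v))\<^sup>2 / 2 \<le> inner_d d p v"
proof -
  have "(\<Sum>j<d. v j * v j / 2 - (p j - v j) * (p j - v j) / 2) \<le> (\<Sum>j<d. p j * v j)"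
  proof (rule sum_mono)
    fix j
    have "p j * v j - (v j * v j / 2 - (p j - v j) * (p j - v j) / 2) = (p j)\<^sup>2 / 2"
      by (simp add: field_simps power2_eq_square)
    moreover have "0 \<le> (p j)\<^sup>2 / 2" by simp
    ultimately show "v j * v j / 2 - (p j - v j) * (p j - v j) / 2 \<le> p j * v j"
      by linarith
  qed
  thus ?thesis unfolding norm_d_power2 inner_d_def vsub_def
    by (simp add: sum_subtractf sum_divide_distrib)
qed

lemma descent_lemma_Rd:
  assumes grad: "has_gradient_on_Rd d F G"
    and lip: "\<forall>x\<in>Rd d. \<forall>y\<in>Rd d. norm_d d (vsub (G x) (G y)) \<le> L * norm_d d (vsub x y)"
    and L: "0 \<le> L" and x: "x \<in> Rd d" and h: "h \<in> Rd d"
  shows "F (vadd x h) \<le> F x + inner_d d (G x) h + L * (norm_d d h)\<^sup>2"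
proof -
  define \<phi> where "\<phi> s = F (vadd x (vscale s h))" for s
  have y: "vadd x (vscale s h) \<in> Rd d" for s using x h by (simp add: Rd_vadd Rd_vscale)
  have deriv: "DERIV \<phi> s :> inner_d d (G (vadd x (vscale s h))) h" for s
  proof -
    let ?y = "vadd x (vscale s h)"
    have "(\<lambda>t. F (vadd ?y (vscale t h))) = (\<lambda>t. \<phi> (t + s))"
      by (rule ext) (simp add: \<phi>_def vadd_def vscale_def algebra_simps)
    moreover have "((\<lambda>t. F (vadd ?y (vscale t h))) has_real_derivative inner_d d (G ?y) h) (at 0)"
      using grad y h unfolding has_gradient_on_Rd_def by blast
    ultimately show ?thesis using DERIV_shift[of \<phi> _ 0 s] by simp
  qed
  txt \<open>The mean value theorem yields the constant L instead of the sharp L/2; this only affects C.\<close>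
  then obtain z where z: "0 < z" "z < 1"
    and mvt: "\<phi> 1 - \<phi> 0 = inner_d d (G (vadd x (vscale z h))) h"
    using MVT2[of 0 1 \<phi>, OF _ deriv] by auto
  let ?y = "vadd x (vscale z h)"
  have "inner_d d (G ?y) h = inner_d d (G x) h + inner_d d (vsub (G ?y) (G x)) h"
    by (simp add: inner_d_vsub_left)
  also have "inner_d d (vsub (G ?y) (G x)) h \<le> norm_d d (vsub (G ?y) (G x)) * norm_d d h"
    by (rule inner_d_le_norm_d_mult)
  also have "norm_d d (vsub (G ?y) (G x)) \<le> L * norm_d d (vsub ?y x)"
    using lip x y by blast
  also have "vsub ?y x = vscale z h"
    by (rule ext) (simp add: vsub_def vadd_def vscale_def)
  also have "L * norm_d d (vscale z h) * norm_d d h = z * (L * (norm_d d h)\<^sup>2)"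
    using z by (simp add: norm_d_vscale power2_eq_square)
  also have "\<dots> \<le> L * (norm_d d h)\<^sup>2"
    using z L by (simp add: mult_left_le_one_le)
  finally show ?thesis
    using mvt norm_d_nonneg[of d h] by (simp add: \<phi>_def vscale_def vadd_def mult_right_mono)
qed

locale smooth_components =
  fixes d n :: nat and f :: "nat \<Rightarrow> (nat \<Rightarrow> real) \<Rightarrow> real"
    and g :: "nat \<Rightarrow> (nat \<Rightarrow> real) \<Rightarrow> (nat \<Rightarrow> real)" and L :: real
  assumes n_ge_1: "n \<ge> 1" and L_nonneg: "0 \<le> L"
    and has_gradient: "\<forall>i<n. has_gradient_on_Rd d (f i) (g i)"
    and lipschitz_gradient:
      "\<forall>i<n. \<forall>x\<in>Rd d. \<forall>y\<in>Rd d. norm_d d (vsub (g i x) (g i y)) \<le> L * norm_d d (vsub x y)"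
begin

lemma gradient_in_Rd: "i < n \<Longrightarrow> x \<in> Rd d \<Longrightarrow> g i x \<in> Rd d"
  using has_gradient unfolding has_gradient_on_Rd_def by blast

lemma full_grad_in_Rd: "x \<in> Rd d \<Longrightarrow> full_grad n g x \<in> Rd d"
  using gradient_in_Rd by (simp add: Rd_def full_grad_def)

lemma avg_fun_descent:
  assumes x: "x \<in> Rd d" and h: "h \<in> Rd d"
  shows "avg_fun n f (vadd x h) \<le> avg_fun n f x + inner_d d (full_grad n g x) h + L * (norm_d d h)\<^sup>2"
proof -
  have "(\<Sum>i<n. f i (vadd x h)) \<le> (\<Sum>i<n. f i x + inner_d d (g i x) h + L * (norm_d d h)\<^sup>2)"
    using descent_lemma_Rd[OF _ _ L_nonneg x h] has_gradient lipschitz_gradient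
    by (intro sum_mono) simp
  also have "\<dots> = (\<Sum>i<n. f i x) + (\<Sum>i<n. inner_d d (g i x) h) + real n * (L * (norm_d d h)\<^sup>2)"
    by (simp add: sum.distrib)
  finally have "(\<Sum>i<n. f i (vadd x h)) / real n
      \<le> ((\<Sum>i<n. f i x) + (\<Sum>i<n. inner_d d (g i x) h) + real n * (L * (norm_d d h)\<^sup>2)) / real n"
    by (rule divide_right_mono) simp
  also have "\<dots> = avg_fun n f x + inner_d d (full_grad n g x) h + L * (norm_d d h)\<^sup>2"
    using n_ge_1 by (simp add: avg_fun_def inner_d_full_grad_left add_divide_distrib)
  finally show ?thesis by (simp add: avg_fun_def)
qed

lemma avg_fun_step_descent:
  assumes x: "x \<in> Rd d" and v: "v \<in> Rd d" and \<gamma>: "0 \<le> \<gamma>"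
  shows "avg_fun n f (vsub x (vscale \<gamma> v)) \<le> avg_fun n f x - \<gamma> / 2 * (norm_d d v)\<^sup>2
     + \<gamma> / 2 * (norm_d d (vsub (full_grad n g x) v))\<^sup>2 + L * \<gamma>\<^sup>2 * (norm_d d v)\<^sup>2"
proof -
  have "vsub x (vscale \<gamma> v) = vadd x (vscale (-\<gamma>) v)"
    by (rule ext) (simp add: vsub_def vadd_def vscale_def)
  hence "avg_fun n f (vsub x (vscale \<gamma> v))
      \<le> avg_fun n f x - \<gamma> * inner_d d (full_grad n g x) v + L * (\<gamma>\<^sup>2 * (norm_d d v)\<^sup>2)"
    using avg_fun_descent[OF x Rd_vscale[OF v, of "-\<gamma>"]]
    by (simp add: inner_d_vscale_right norm_d_vscale power_mult_distrib)
  moreover have "\<gamma> * ((norm_d d v)\<^sup>2 / 2 - (norm_d d (vsub (full_grad n g x) v))\<^sup>2 / 2)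
      \<le> \<gamma> * inner_d d (full_grad n g x) v"
    using \<gamma> inner_d_ge_half_norm_d_diff by (rule mult_left_mono[rotated])
  ultimately show ?thesis by (simp add: algebra_simps)
qed

lemma avg_fun_trajectory_descent:
  assumes x0: "x 0 \<in> Rd d"
    and step: "\<And>t. t < m \<Longrightarrow> x (Suc t) = vsub (x t) (vscale (\<gamma> t) (v t))"
    and v: "\<And>t. t < m \<Longrightarrow> v t \<in> Rd d" and \<gamma>: "\<And>t. t < m \<Longrightarrow> 0 \<le> \<gamma> t"
  shows "x m \<in> Rd d \<and> avg_fun n f (x m) \<le> avg_fun n f (x 0) - (\<Sum>t<m. \<gamma> t / 2 * (norm_d d (v t))\<^sup>2
     - \<gamma> t / 2 * (norm_d d (vsub (full_grad n g (x t)) (v t)))\<^sup>2 - L * (\<gamma> t)\<^sup>2 * (norm_d d (v t))\<^sup>2)"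
  using assms
proof (induction m)
  case 0
  then show ?case by simp
next
  case (Suc m)
  then have "x m \<in> Rd d" by simp
  with Suc.prems show ?case
    using Suc.IH avg_fun_step_descent[of "x m" "v m" "\<gamma> m"]
    by (simp add: Rd_vsub Rd_vscale)
qed

lemma sum_weighted_norms_le_gap:
  assumes bdd: "bdd_below (avg_fun n f ` Rd d)" and x0: "x 0 \<in> Rd d"
    and step: "\<And>t. t < T \<Longrightarrow> x (Suc t) = vsub (x t) (vscale (\<gamma> t) (v t))"
    and v: "\<And>t. t < T \<Longrightarrow> v t \<in> Rd d" and \<gamma>: "\<And>t. t < T \<Longrightarrow> 0 \<le> \<gamma> t"
  shows "(\<Sum>t<T. \<gamma> t * (norm_d d (v t))\<^sup>2) / 2
    \<le> (avg_fun n f (x 0) - (INF y\<in>Rd d. avg_fun n f y))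
      + (\<Sum>t<T. \<gamma> t * (norm_d d (vsub (full_grad n g (x t)) (v t)))\<^sup>2) / 2
      + L * (\<Sum>t<T. (\<gamma> t)\<^sup>2 * (norm_d d (v t))\<^sup>2)"
proof -
  have xT: "x T \<in> Rd d"
    and descent: "avg_fun n f (x T) \<le> avg_fun n f (x 0) - (\<Sum>t<T. \<gamma> t / 2 * (norm_d d (v t))\<^sup>2
     - \<gamma> t / 2 * (norm_d d (vsub (full_grad n g (x t)) (v t)))\<^sup>2 - L * (\<gamma> t)\<^sup>2 * (norm_d d (v t))\<^sup>2)"
    using avg_fun_trajectory_descent[OF x0 step v \<gamma>] by auto
  have "(INF y\<in>Rd d. avg_fun n f y) \<le> avg_fun n f (x T)"
    using bdd xT by (intro cINF_lower) auto
  with descent show ?thesis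
    by (simp add: sum_subtractf sum_divide_distrib sum_distrib_left mult.assoc)
qed

end

lemma sp_x_0: "sp_x d n g x0 \<beta>0 G0 \<omega> 0 = x0"
  by (simp add: sp_x_def Let_def)

lemma sp_grad_0: "sp_grad d n g x0 \<beta>0 G0 \<omega> 0 = full_grad n g x0"
  by (simp add: sp_grad_def Let_def)

lemma sp_x_Suc:
  "sp_x d n g x0 \<beta>0 G0 \<omega> (Suc t) = vsub (sp_x d n g x0 \<beta>0 G0 \<omega> t)
      (vscale (sp_gamma d n g x0 \<beta>0 G0 \<omega> t) (sp_grad d n g x0 \<beta>0 G0 \<omega> t))"
  by (simp add: sp_x_def sp_grad_def sp_gamma_def Let_def case_prod_beta)

lemma sp_grad_Suc:
  "sp_grad d n g x0 \<beta>0 G0 \<omega> (Suc t) =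
    (if Suc t mod n = 0 then full_grad n g (sp_x d n g x0 \<beta>0 G0 \<omega> (Suc t))
     else vadd (vsub (g (\<omega> (Suc t)) (sp_x d n g x0 \<beta>0 G0 \<omega> (Suc t)))
                     (g (\<omega> (Suc t)) (sp_x d n g x0 \<beta>0 G0 \<omega> t)))
               (sp_grad d n g x0 \<beta>0 G0 \<omega> t))"
  by (simp add: sp_x_def sp_grad_def sp_gamma_def Let_def case_prod_beta)

lemma spider_sum_sq_norms:
  "snd (snd (spider d n g x0 \<beta>0 G0 \<omega> t)) = (\<Sum>s<Suc t. (norm_d d (sp_grad d n g x0 \<beta>0 G0 \<omega> s))\<^sup>2)"
  by (induction t) (simp_all add: sp_grad_def Let_def case_prod_beta)

lemma sp_gamma_eq:
  "sp_gamma d n g x0 \<beta>0 G0 \<omega> t = 1 / (real n powr (1/4) * \<beta>0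
     * sqrt ((real n powr (1/4) * G0)\<^sup>2 + (\<Sum>s<Suc t. (norm_d d (sp_grad d n g x0 \<beta>0 G0 \<omega> s))\<^sup>2)))"
proof -
  have "(real n powr (1/4))\<^sup>2 = sqrt (real n)"
    by (simp add: power2_eq_square powr_add[symmetric] powr_half_sqrt)
  thus ?thesis
    by (simp add: sp_gamma_def spider_sum_sq_norms ada_step_def power_mult_distrib)
qed

lemma (in smooth_components) spider_in_Rd:
  assumes x0: "x0 \<in> Rd d" and \<omega>: "\<And>s. s \<le> t \<Longrightarrow> \<omega> s < n"
  shows "sp_x d n g x0 \<beta>0 G0 \<omega> t \<in> Rd d \<and> sp_grad d n g x0 \<beta>0 G0 \<omega> t \<in> Rd d"
  using \<omega>
proof (induction t)
  case 0
  show ?case using x0 by (simp add: sp_x_0 sp_grad_0 full_grad_in_Rd)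
next
  case (Suc t)
  then have IH: "sp_x d n g x0 \<beta>0 G0 \<omega> t \<in> Rd d" "sp_grad d n g x0 \<beta>0 G0 \<omega> t \<in> Rd d"
    by simp_all
  then have "sp_x d n g x0 \<beta>0 G0 \<omega> (Suc t) \<in> Rd d"
    by (simp add: sp_x_Suc Rd_vsub Rd_vscale)
  with IH Suc.prems[of "Suc t"] show ?case
    by (simp add: sp_grad_Suc[of d n g x0 \<beta>0 G0 \<omega> t] full_grad_in_Rd gradient_in_Rd
        Rd_vadd Rd_vsub del: sp_x_Suc)
qed

lemma sum_div_partial_sums_le_ln:
  fixes a :: "nat \<Rightarrow> real"
  assumes a: "\<And>t. 0 \<le> a t" and c: "0 < c"
  shows "(\<Sum>t<T. a t / (c + (\<Sum>s<Suc t. a s))) \<le> ln ((c + (\<Sum>t<T. a t)) / c)"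
proof (induction T)
  case 0
  then show ?case by simp
next
  case (Suc T)
  define y where "y = c + (\<Sum>s<T. a s)"
  define z where "z = y + a T"
  have y: "0 < y" using c a by (simp add: y_def add_pos_nonneg sum_nonneg)
  have z: "0 < z" "y \<le> z" using y a by (auto simp: z_def intro: add_pos_nonneg)
  have "a T / z = 1 - y / z" using z by (simp add: z_def field_simps)
  also have "\<dots> \<le> - ln (y / z)" using ln_le_minus_one[of "y / z"] y z by simp
  also have "\<dots> = ln (z / c) - ln (y / c)" using y z c by (simp add: ln_div)
  finally show ?case using Suc.IH by (simp add: y_def z_def add.assoc)
qed

lemma sum_adagrad_steps_sq_le:
  fixes a :: "nat \<Rightarrow> real"
  assumes a: "\<And>t. 0 \<le> a t" and c: "0 < c" and \<rho>: "0 < \<rho>"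
  shows "(\<Sum>t<T. (1 / (\<rho> * sqrt (c + (\<Sum>s<Suc t. a s))))\<^sup>2 * a t)
    \<le> ln ((c + (\<Sum>t<T. a t)) / c) / \<rho>\<^sup>2"
proof -
  have Q: "0 < c + (\<Sum>s<Suc t. a s)" for t using c a by (simp add: add_pos_nonneg sum_nonneg)
  have "(\<Sum>t<T. (1 / (\<rho> * sqrt (c + (\<Sum>s<Suc t. a s))))\<^sup>2 * a t)
      = (\<Sum>t<T. a t / (c + (\<Sum>s<Suc t. a s))) / \<rho>\<^sup>2"
    unfolding sum_divide_distrib
    by (rule sum.cong) (use Q in \<open>simp_all add: power_mult_distrib power_divide less_imp_le\<close>)
  also have "\<dots> \<le> ln ((c + (\<Sum>t<T. a t)) / c) / \<rho>\<^sup>2"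
    using sum_div_partial_sums_le_ln[OF a c] by (simp add: divide_right_mono)
  finally show ?thesis .
qed

lemma sum_adagrad_steps_ge:
  fixes a :: "nat \<Rightarrow> real"
  assumes a: "\<And>t. 0 \<le> a t" and c: "0 < c" and \<rho>: "0 < \<rho>"
  shows "(\<Sum>t<T. a t) / (\<rho> * sqrt (c + (\<Sum>t<T. a t)))
    \<le> (\<Sum>t<T. 1 / (\<rho> * sqrt (c + (\<Sum>s<Suc t. a s))) * a t)"
  unfolding sum_divide_distrib
proof (rule sum_mono)
  fix t assume "t \<in> {..<T}"
  then have "(\<Sum>s<Suc t. a s) \<le> (\<Sum>s<T. a s)" using a by (intro sum_mono2) auto
  moreover have "0 < c + (\<Sum>s<Suc t. a s)" using c a by (simp add: add_pos_nonneg sum_nonneg)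
  ultimately have "1 / (\<rho> * sqrt (c + (\<Sum>t<T. a t))) \<le> 1 / (\<rho> * sqrt (c + (\<Sum>s<Suc t. a s)))"
    using \<rho> by (intro divide_left_mono mult_left_mono mult_pos_pos) auto
  then have "1 / (\<rho> * sqrt (c + (\<Sum>t<T. a t))) * a t \<le> 1 / (\<rho> * sqrt (c + (\<Sum>s<Suc t. a s))) * a t"
    using a[of t] by (rule mult_right_mono)
  then show "a t / (\<rho> * sqrt (c + (\<Sum>t<T. a t))) \<le> 1 / (\<rho> * sqrt (c + (\<Sum>s<Suc t. a s))) * a t"
    by simp
qed

lemma mult_ln_le_linear_plus_mult_ln:
  fixes K A B c :: real
  assumes K: "0 \<le> K" and A: "0 < A" and B: "0 < B" and c: "0 < c"
  shows "K * ln (A / B) \<le> A / c + K * ln (c * K / B)"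
proof (cases "K = 0")
  case True
  then show ?thesis using A c by simp
next
  case False
  with K have K: "0 < K" by simp
  have "K * ln (A / (c * K)) \<le> K * (A / (c * K))"
    using K A c ln_le_minus_one[of "A / (c * K)"] by (intro mult_left_mono) auto
  moreover have "ln (A / B) = ln (A / (c * K)) + ln (c * K / B)"
    using K A B c by (simp add: ln_div ln_mult)
  ultimately show ?thesis using K c by (simp add: distrib_left)
qed

lemma sqrt_le_of_self_bounding:
  fixes Q B \<rho> L \<Delta> E :: real
  assumes \<rho>: "0 < \<rho>" and B: "0 < B" and L: "0 \<le> L" and Q: "B\<^sup>2 \<le> Q"
    and self_bound: "(Q - B\<^sup>2) / (2 * \<rho> * sqrt Q) \<le> \<Delta> + E / 2 + L / \<rho>\<^sup>2 * ln (Q / B\<^sup>2)"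
  shows "sqrt Q \<le> 2 * B + 4 * \<rho> * \<Delta> + 2 * \<rho> * E + 8 * (L / \<rho>) * ln (8 * (L / \<rho>) / B)"
proof -
  define A where "A = sqrt Q"
  define K where "K = L / \<rho>"
  have AB: "B \<le> A" using Q B by (simp add: A_def real_le_rsqrt)
  with B have A: "0 < A" by simp
  have "0 \<le> Q" using Q zero_le_power2[of B] by linarith
  then have QA: "Q = A\<^sup>2" by (simp add: A_def)
  have "A - B \<le> (A\<^sup>2 - B\<^sup>2) / A"
    using A AB B by (simp add: field_simps power2_eq_square mult_left_mono)
  also have "\<dots> = 2 * \<rho> * ((Q - B\<^sup>2) / (2 * \<rho> * sqrt Q))"
    using A \<rho> by (simp add: QA)
  also have "\<dots> \<le> 2 * \<rho> * (\<Delta> + E / 2 + L / \<rho>\<^sup>2 * ln (Q / B\<^sup>2))"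
    using self_bound \<rho> by (intro mult_left_mono) auto
  also have "\<dots> = 2 * \<rho> * \<Delta> + \<rho> * E + 4 * (K * ln (A / B))"
    using A B \<rho> by (simp add: QA K_def ln_div power2_eq_square ln_mult field_simps)
  also have "K * ln (A / B) \<le> A / 8 + K * ln (8 * K / B)"
    using L \<rho> A B by (intro mult_ln_le_linear_plus_mult_ln) (auto simp: K_def)
  finally show ?thesis by (simp add: A_def K_def)
qed

lemma le_one_plus_two_mult_ln:
  fixes a :: real
  assumes a: "0 \<le> a"
  shows "a \<le> 1 + 2 * a * ln (1 + a)"
proof (cases "a \<le> 1")
  case True
  have "0 \<le> 2 * a * ln (1 + a)" using a by simp
  with True show ?thesis by linarith
next
  case False
  have "1 / 2 \<le> ln (2::real)" using ln_le_minus_one[of "1 / 2"] by (simp add: ln_div)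
  also have "\<dots> \<le> ln (1 + a)" using False by simp
  finally have "a * (1 / 2) \<le> a * ln (1 + a)" using a by (intro mult_left_mono)
  then show ?thesis by simp
qed

lemma adagrad_log_term_le:
  fixes r \<beta> G0 L :: real
  assumes r: "1 \<le> r" and \<beta>: "0 < \<beta>" and G0: "0 < G0" and L: "0 \<le> L"
  shows "8 * (L / (r * \<beta>)) * ln (8 * (L / (r * \<beta>)) / (r * G0))
    \<le> 56 * G0 + 120 * (L / \<beta> * ln (1 + L / (\<beta> * G0)))"
proof -
  define a where "a = L / (\<beta> * G0)"
  have a: "0 \<le> a" using L \<beta> G0 by (simp add: a_def)
  have La: "L / \<beta> = a * G0" using G0 by (simp add: a_def)
  have ln_le: "ln (8 * (L / (r * \<beta>)) / (r * G0)) \<le> 7 + ln (1 + a)"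
  proof (cases "L = 0")
    case True
    then show ?thesis by (simp add: a_def)
  next
    case False
    have "8 * (L / (r * \<beta>)) / (r * G0) = 8 * a / r\<^sup>2"
      using r \<beta> G0 by (simp add: a_def field_simps power2_eq_square)
    also have "\<dots> \<le> 8 * a / 1"
      using r a by (intro divide_left_mono) (auto simp: one_le_power)
    also have "\<dots> \<le> 8 * (1 + a)" by simp
    moreover have "0 < 8 * (L / (r * \<beta>)) / (r * G0)" using False L r \<beta> G0 by simp
    ultimately have "ln (8 * (L / (r * \<beta>)) / (r * G0)) \<le> ln (8 * (1 + a))"
      using a by (subst ln_le_cancel_iff) auto
    also have "\<dots> = ln 8 + ln (1 + a)" using ln_mult[of 8 "1 + a"] a by simp
    finally have "ln (8 * (L / (r * \<beta>)) / (r * G0)) \<le> ln 8 + ln (1 + a)" .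
    moreover have "ln (8::real) \<le> 7" using ln_le_minus_one[of 8] by simp
    ultimately show ?thesis by simp
  qed
  have "8 * (L / (r * \<beta>)) * ln (8 * (L / (r * \<beta>)) / (r * G0)) \<le> 8 * (L / (r * \<beta>)) * (7 + ln (1 + a))"
    using ln_le L \<beta> r by (intro mult_left_mono) auto
  also have "\<dots> \<le> 8 * (L / \<beta>) * (7 + ln (1 + a))"
    using L \<beta> r a by (intro mult_right_mono mult_left_mono divide_left_mono) auto
  also have "\<dots> \<le> 56 * G0 + 120 * (L / \<beta> * ln (1 + a))"
    using mult_left_mono[OF le_one_plus_two_mult_ln[OF a], of G0] G0 La by (simp add: algebra_simps)
  finally show ?thesis by (simp add: a_def)
qed

lemma ln_one_plus_le_ln_one_plus_mult:
  fixes a u k :: real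
  assumes a: "0 \<le> a" and u: "0 \<le> u" and k: "1 \<le> k"
  shows "ln (1 + a) \<le> ln (1 + k * (a + u))"
proof -
  have "1 * (a + u) \<le> k * (a + u)" using a u k by (intro mult_right_mono) auto
  with a u show ?thesis by (subst ln_le_cancel_iff) auto
qed

lemma adagrad_norm_bound:
  fixes a :: "nat \<Rightarrow> real" and r \<beta> G0 L \<Delta> E :: real
  assumes a: "\<And>t. 0 \<le> a t" and r: "1 \<le> r" and \<beta>: "0 < \<beta>" and G0: "0 < G0" and L: "0 \<le> L"
    and \<Delta>: "0 \<le> \<Delta>" and E: "0 \<le> E"
    and \<gamma>: "\<And>t. \<gamma> t = 1 / (r * \<beta> * sqrt ((r * G0)\<^sup>2 + (\<Sum>s<Suc t. a s)))"
    and descent: "(\<Sum>t<T. \<gamma> t * a t) / 2 \<le> \<Delta> + E / 2 + L * (\<Sum>t<T. (\<gamma> t)\<^sup>2 * a t)"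
  shows "sqrt ((r * G0)\<^sup>2 + (\<Sum>t<T. a t))
    \<le> 120 * r * (\<Delta> * \<beta> + G0 + L / \<beta> * ln (1 + L / (\<beta> * G0)) + \<beta> * E)"
proof -
  define Q where "Q = (r * G0)\<^sup>2 + (\<Sum>t<T. a t)"
  define \<Psi> where "\<Psi> = L / \<beta> * ln (1 + L / (\<beta> * G0))"
  have \<rho>: "0 < r * \<beta>" and B: "0 < r * G0" and c: "0 < (r * G0)\<^sup>2" using r \<beta> G0 by simp_all
  have "(Q - (r * G0)\<^sup>2) / (2 * (r * \<beta>) * sqrt Q) \<le> (\<Sum>t<T. \<gamma> t * a t) / 2"
    using sum_adagrad_steps_ge[of a, OF a c \<rho>, where T = T] by (simp add: Q_def \<gamma> mult.assoc)
  also have "\<dots> \<le> \<Delta> + E / 2 + L * (\<Sum>t<T. (\<gamma> t)\<^sup>2 * a t)"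
    by (rule descent)
  also have "(\<Sum>t<T. (\<gamma> t)\<^sup>2 * a t) \<le> ln (Q / (r * G0)\<^sup>2) / (r * \<beta>)\<^sup>2"
    using sum_adagrad_steps_sq_le[of a, OF a c \<rho>, where T = T] by (simp add: Q_def \<gamma> mult.assoc)
  finally have "(Q - (r * G0)\<^sup>2) / (2 * (r * \<beta>) * sqrt Q)
      \<le> \<Delta> + E / 2 + L / (r * \<beta>)\<^sup>2 * ln (Q / (r * G0)\<^sup>2)"
    using L by (simp add: mult_left_mono)
  then have "sqrt Q \<le> 2 * (r * G0) + 4 * (r * \<beta>) * \<Delta> + 2 * (r * \<beta>) * E
      + 8 * (L / (r * \<beta>)) * ln (8 * (L / (r * \<beta>)) / (r * G0))"
    using a by (intro sqrt_le_of_self_bounding[OF \<rho> B L]) (auto simp: Q_def sum_nonneg)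
  also have "\<dots> \<le> 2 * (r * G0) + 4 * (r * \<beta>) * \<Delta> + 2 * (r * \<beta>) * E + 56 * G0 + 120 * \<Psi>"
    using adagrad_log_term_le[OF r \<beta> G0 L] by (simp add: \<Psi>_def)
  also have "\<dots> \<le> 120 * r * (\<Delta> * \<beta> + G0 + \<Psi> + \<beta> * E)"
  proof -
    have "0 \<le> \<Psi>" using L \<beta> G0 by (simp add: \<Psi>_def)
    then have "G0 \<le> r * G0" "\<Psi> \<le> r * \<Psi>" "0 \<le> r * \<beta> * \<Delta>" "0 \<le> r * \<beta> * E"
      using r G0 \<beta> \<Delta> E mult_right_mono[of 1 r] by auto
    moreover have "0 \<le> r * G0" using r G0 by simp
    moreover have "120 * r * (\<Delta> * \<beta> + G0 + \<Psi> + \<beta> * E)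
        = 120 * (r * \<beta> * \<Delta>) + 120 * (r * G0) + 120 * (r * \<Psi>) + 120 * (r * \<beta> * E)"
      by (simp add: algebra_simps)
    moreover have "4 * (r * \<beta>) * \<Delta> = 4 * (r * \<beta> * \<Delta>)" "2 * (r * \<beta>) * E = 2 * (r * \<beta> * E)"
      by simp_all
    ultimately show ?thesis by linarith
  qed
  finally show ?thesis by (simp add: Q_def \<Psi>_def)
qed

lemma sum_le_sqrt_mult_sqrt_sum_power2:
  fixes b :: "nat \<Rightarrow> real"
  shows "(\<Sum>t<T. b t) \<le> sqrt (real T) * sqrt (\<Sum>t<T. (b t)\<^sup>2)"
proof -
  have "(\<Sum>t<T. b t)\<^sup>2 \<le> (\<Sum>t<T. (b t)\<^sup>2) * real T"
    using sum_squared_le_sum_of_squares[of b "{..<T}"] by simp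
  hence "\<bar>\<Sum>t<T. b t\<bar> \<le> sqrt ((\<Sum>t<T. (b t)\<^sup>2) * real T)"
    by (metis real_sqrt_abs real_sqrt_le_mono)
  thus ?thesis by (simp add: real_sqrt_mult mult.commute)
qed

lemma (in smooth_components) spider_pathwise_bound:
  assumes T: "T \<ge> 1" and \<beta>0: "\<beta>0 > 0" and G0: "G0 > 0" and x0: "x0 \<in> Rd d"
    and bdd: "bdd_below (avg_fun n f ` Rd d)" and \<omega>: "\<forall>t<T. \<omega> t < n"
  shows "(\<Sum>t<T. norm_d d (sp_grad d n g x0 \<beta>0 G0 \<omega> t))
     \<le> 120 * ((avg_fun n f x0 - (INF x\<in>Rd d. avg_fun n f x)) * \<beta>0 + G0
            + L / \<beta>0 * ln (1 + real n * real T * (L / (\<beta>0 * G0) + norm_d d (full_grad n g x0) / G0))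
            + \<beta>0 * (\<Sum>t<T. sp_gamma d n g x0 \<beta>0 G0 \<omega> t *
                    (norm_d d (vsub (full_grad n g (sp_x d n g x0 \<beta>0 G0 \<omega> t)) (sp_grad d n g x0 \<beta>0 G0 \<omega> t)))\<^sup>2))
        * real n powr (1/4) * sqrt (real T)"
proof -
  define x where "x = sp_x d n g x0 \<beta>0 G0 \<omega>"
  define v where "v = sp_grad d n g x0 \<beta>0 G0 \<omega>"
  define \<gamma> where "\<gamma> = sp_gamma d n g x0 \<beta>0 G0 \<omega>"
  define a where "a t = (norm_d d (v t))\<^sup>2" for t
  define r where "r = real n powr (1/4)"
  define \<Delta> where "\<Delta> = avg_fun n f x0 - (INF y\<in>Rd d. avg_fun n f y)"
  define E where "E = (\<Sum>t<T. \<gamma> t * (norm_d d (vsub (full_grad n g (x t)) (v t)))\<^sup>2)"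
  define \<Lambda> where "\<Lambda> = ln (1 + real n * real T * (L / (\<beta>0 * G0) + norm_d d (full_grad n g x0) / G0))"
  have r: "1 \<le> r" using n_ge_1 by (simp add: r_def ge_one_powr_ge_zero)
  have \<gamma>_eq: "\<gamma> t = 1 / (r * \<beta>0 * sqrt ((r * G0)\<^sup>2 + (\<Sum>s<Suc t. a s)))" for t
    by (simp add: \<gamma>_def sp_gamma_eq r_def a_def v_def)
  have \<gamma>_nonneg: "0 \<le> \<gamma> t" for t
  proof -
    have "0 \<le> (r * G0)\<^sup>2 + (\<Sum>s<Suc t. a s)" by (simp add: a_def sum_nonneg)
    then show ?thesis using r \<beta>0 by (simp add: \<gamma>_eq)
  qed
  have \<Delta>: "0 \<le> \<Delta>" using bdd x0 by (simp add: \<Delta>_def cINF_lower)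
  have E: "0 \<le> E" using \<gamma>_nonneg by (simp add: E_def sum_nonneg)
  have x_0: "x 0 = x0" by (simp add: x_def sp_x_0)
  have x_Suc: "x (Suc t) = vsub (x t) (vscale (\<gamma> t) (v t))" for t
    by (simp add: x_def v_def \<gamma>_def sp_x_Suc)
  have v_in_Rd: "v t \<in> Rd d" if "t < T" for t
    using spider_in_Rd[OF x0, of t \<omega>] \<omega> that by (simp add: v_def)
  have descent: "(\<Sum>t<T. \<gamma> t * a t) / 2 \<le> \<Delta> + E / 2 + L * (\<Sum>t<T. (\<gamma> t)\<^sup>2 * a t)"
    using sum_weighted_norms_le_gap[where x = x and T = T and \<gamma> = \<gamma> and v = v,
        OF bdd _ x_Suc v_in_Rd \<gamma>_nonneg] x0
    by (simp add: x_0 a_def \<Delta>_def E_def)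
  have "1 \<le> real n * real T" using mult_mono[of 1 "real n" 1 "real T"] n_ge_1 T by simp
  then have ln_le_\<Lambda>: "ln (1 + L / (\<beta>0 * G0)) \<le> \<Lambda>"
    unfolding \<Lambda>_def using L_nonneg \<beta>0 G0 norm_d_nonneg
    by (intro ln_one_plus_le_ln_one_plus_mult) auto
  have "sqrt ((r * G0)\<^sup>2 + (\<Sum>t<T. a t))
      \<le> 120 * r * (\<Delta> * \<beta>0 + G0 + L / \<beta>0 * ln (1 + L / (\<beta>0 * G0)) + \<beta>0 * E)"
    using descent r \<beta>0 G0 L_nonneg \<Delta> E \<gamma>_eq by (intro adagrad_norm_bound) (auto simp: a_def)
  also have "\<dots> \<le> 120 * r * (\<Delta> * \<beta>0 + G0 + L / \<beta>0 * \<Lambda> + \<beta>0 * E)"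
    using ln_le_\<Lambda> r L_nonneg \<beta>0 \<Delta> E by (intro mult_left_mono add_mono) auto
  finally have sqrt_Q_le:
    "sqrt ((r * G0)\<^sup>2 + (\<Sum>t<T. a t)) \<le> 120 * r * (\<Delta> * \<beta>0 + G0 + L / \<beta>0 * \<Lambda> + \<beta>0 * E)" .
  have "(\<Sum>t<T. norm_d d (v t)) \<le> sqrt (real T) * sqrt (\<Sum>t<T. a t)"
    using sum_le_sqrt_mult_sqrt_sum_power2[of "\<lambda>t. norm_d d (v t)" T] by (simp add: a_def)
  also have "\<dots> \<le> sqrt (real T) * sqrt ((r * G0)\<^sup>2 + (\<Sum>t<T. a t))"
    by (simp add: mult_left_mono)
  also have "\<dots> \<le> sqrt (real T) * (120 * r * (\<Delta> * \<beta>0 + G0 + L / \<beta>0 * \<Lambda> + \<beta>0 * E))"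
    using sqrt_Q_le by (simp add: mult_left_mono)
  finally show ?thesis
    by (simp add: x_def v_def \<gamma>_def \<Delta>_def E_def \<Lambda>_def r_def algebra_simps)
qed

lemma set_pmf_idx_pmf: "n \<ge> 1 \<Longrightarrow> set_pmf (idx_pmf n T) = PiE {..<T} (\<lambda>_. {..<n})"
  unfolding idx_pmf_def by (subst set_pmf_of_set) (auto simp: finite_PiE PiE_eq_empty_iff lessThan_empty_iff)

lemma expectation_le_affine_if_pointwise:
  fixes Y Z :: "'a \<Rightarrow> real"
  assumes fin: "finite (set_pmf p)" and le: "\<And>\<omega>. \<omega> \<in> set_pmf p \<Longrightarrow> Y \<omega> \<le> \<alpha> + \<kappa> * Z \<omega>"
  shows "measure_pmf.expectation p Y \<le> \<alpha> + \<kappa> * measure_pmf.expectation p Z"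
proof -
  have int: "integrable (measure_pmf p) h" for h :: "'a \<Rightarrow> real"
    using fin by (rule integrable_measure_pmf_finite)
  have "measure_pmf.expectation p Y \<le> measure_pmf.expectation p (\<lambda>\<omega>. \<alpha> + \<kappa> * Z \<omega>)"
    using int le by (intro integral_mono_AE) (auto intro!: AE_pmfI)
  also have "\<dots> = \<alpha> + \<kappa> * measure_pmf.expectation p Z"
    using int by (simp add: measure_pmf.prob_space)
  finally show ?thesis .
qed

lemma (in smooth_components) spider_expected_bound:
  assumes T: "T \<ge> 1" and \<beta>0: "\<beta>0 > 0" and G0: "G0 > 0" and x0: "x0 \<in> Rd d"
    and bdd: "bdd_below (avg_fun n f ` Rd d)"
  shows "measure_pmf.expectation (idx_pmf n T)
        (\<lambda>\<omega>. \<Sum>t<T. norm_d d (sp_grad d n g x0 \<beta>0 G0 \<omega> t))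
     \<le> 120 * ((avg_fun n f x0 - (INF x\<in>Rd d. avg_fun n f x)) * \<beta>0 + G0
            + L / \<beta>0 * ln (1 + real n * real T * (L / (\<beta>0 * G0) + norm_d d (full_grad n g x0) / G0))
            + \<beta>0 * measure_pmf.expectation (idx_pmf n T)
                (\<lambda>\<omega>. \<Sum>t<T. sp_gamma d n g x0 \<beta>0 G0 \<omega> t *
                    (norm_d d (vsub (full_grad n g (sp_x d n g x0 \<beta>0 G0 \<omega> t)) (sp_grad d n g x0 \<beta>0 G0 \<omega> t)))\<^sup>2))
        * real n powr (1/4) * sqrt (real T)"
proof -
  define Y where "Y = (\<lambda>\<omega>. \<Sum>t<T. norm_d d (sp_grad d n g x0 \<beta>0 G0 \<omega> t))"
  define Z where "Z = (\<lambda>\<omega>. \<Sum>t<T. sp_gamma d n g x0 \<beta>0 G0 \<omega> t *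
    (norm_d d (vsub (full_grad n g (sp_x d n g x0 \<beta>0 G0 \<omega> t)) (sp_grad d n g x0 \<beta>0 G0 \<omega> t)))\<^sup>2)"
  define K where "K = (avg_fun n f x0 - (INF x\<in>Rd d. avg_fun n f x)) * \<beta>0 + G0
    + L / \<beta>0 * ln (1 + real n * real T * (L / (\<beta>0 * G0) + norm_d d (full_grad n g x0) / G0))"
  define k where "k = 120 * real n powr (1/4) * sqrt (real T)"
  have "measure_pmf.expectation (idx_pmf n T) Y
      \<le> k * K + (k * \<beta>0) * measure_pmf.expectation (idx_pmf n T) Z"
  proof (rule expectation_le_affine_if_pointwise)
    show "finite (set_pmf (idx_pmf n T))" using n_ge_1 by (simp add: set_pmf_idx_pmf finite_PiE)
  next
    fix \<omega> assume "\<omega> \<in> set_pmf (idx_pmf n T)"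
    then have "\<forall>t<T. \<omega> t < n" using n_ge_1 by (auto simp: set_pmf_idx_pmf PiE_def Pi_def)
    then show "Y \<omega> \<le> k * K + (k * \<beta>0) * Z \<omega>"
      using spider_pathwise_bound[OF T \<beta>0 G0 x0 bdd] by (simp add: Y_def Z_def K_def k_def algebra_simps)
  qed
  then show ?thesis by (simp add: Y_def Z_def K_def k_def algebra_simps)
qed

theorem lemma4:
  "\<exists>C>0. \<forall>(d::nat) (n::nat) (f :: nat \<Rightarrow> (nat \<Rightarrow> real) \<Rightarrow> real)
       (g :: nat \<Rightarrow> (nat \<Rightarrow> real) \<Rightarrow> (nat \<Rightarrow> real)) (L::real) (x0 :: nat \<Rightarrow> real)
       (\<beta>0::real) (G0::real) (T::nat).
     n \<ge> 1 \<and> T \<ge> 1 \<and> 0 \<le> L \<and> \<beta>0 > 0 \<and> G0 > 0 \<and> x0 \<in> Rd d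
     \<and> (\<forall>i<n. has_gradient_on_Rd d (f i) (g i))
     \<and> (\<forall>i<n. \<forall>x\<in>Rd d. \<forall>y\<in>Rd d. norm_d d (vsub (g i x) (g i y)) \<le> L * norm_d d (vsub x y))
     \<and> bdd_below (avg_fun n f ` Rd d)
     \<longrightarrow>
     measure_pmf.expectation (idx_pmf n T)
        (\<lambda>\<omega>. \<Sum>t<T. norm_d d (sp_grad d n g x0 \<beta>0 G0 \<omega> t))
     \<le> C * ((avg_fun n f x0 - (INF x\<in>Rd d. avg_fun n f x)) * \<beta>0 + G0
            + L / \<beta>0 * ln (1 + real n * real T * (L / (\<beta>0 * G0) + norm_d d (full_grad n g x0) / G0))
            + \<beta>0 * measure_pmf.expectation (idx_pmf n T)
                (\<lambda>\<omega>. \<Sum>t<T. sp_gamma d n g x0 \<beta>0 G0 \<omega> t *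
                    (norm_d d (vsub (full_grad n g (sp_x d n g x0 \<beta>0 G0 \<omega> t)) (sp_grad d n g x0 \<beta>0 G0 \<omega> t)))^2))
        * real n powr (1/4) * sqrt (real T)"
  by (intro exI[of _ 120] conjI allI impI, simp, elim conjE, rule smooth_components.spider_expected_bound)
    (simp_all add: smooth_components_def)

end
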